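(* Let $P=P_1\cup P_2$ be a finite set of points in the plane with $P$ generic, such that $P_1$ is contained in a disk of radius $1$ centered at a point $o$, and every point $a\in P_2$ satisfies $|oa|>3$ and lies in a fixed wedge with apex $o$ and angle $3.6^\circ$. Then $T_P$ contains exactly one edge connecting a point of $P_1$ to a point of $P_2$ (i.e., only one such edge).
   Context: A finite planar point set is generic if no three of its points are collinear and every subset has a unique Euclidean minimum spanning tree (MST); $T_P$ denotes the MST of $P$. $|uv|$ is the Euclidean distance. *)

theory Defs
  imports "HOL-Analysis.Analysis"
begin

text \<open>Points of the plane are represented as complex numbers; the Euclidean
distance is \<open>dist a b = cmod (a - b)\<close>. A graph on a vertex set S is a set of
edges, each edge an unordered pair {a,b} with a \<noteq> b, a,b \<in> S.\<close>

definition possible_edges :: "complex set \<Rightarrow> complex set set" where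
  "possible_edges S = {{a, b} | a b. a \<in> S \<and> b \<in> S \<and> a \<noteq> b}"

definition edge_rel :: "complex set set \<Rightarrow> (complex \<times> complex) set" where
  "edge_rel E = {(a, b). {a, b} \<in> E}"

definition connected_graph :: "complex set \<Rightarrow> complex set set \<Rightarrow> bool" where
  "connected_graph S E \<longleftrightarrow> (\<forall>a\<in>S. \<forall>b\<in>S. (a, b) \<in> (edge_rel E)\<^sup>*)"

definition spanning_tree :: "complex set \<Rightarrow> complex set set \<Rightarrow> bool" where
  "spanning_tree S T \<longleftrightarrow> T \<subseteq> possible_edges S \<and> connected_graph S T \<and> card T = card S - 1"

definition edge_length :: "complex set \<Rightarrow> real" where
  "edge_length e = (THE d. \<exists>a b. e = {a, b} \<and> d = dist a b)"

definition weight :: "complex set set \<Rightarrow> real" where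
  "weight T = (\<Sum>e\<in>T. edge_length e)"

definition is_mst :: "complex set \<Rightarrow> complex set set \<Rightarrow> bool" where
  "is_mst S T \<longleftrightarrow> spanning_tree S T \<and> (\<forall>T'. spanning_tree S T' \<longrightarrow> weight T \<le> weight T')"

definition MST :: "complex set \<Rightarrow> complex set set" where
  "MST S = (THE T. is_mst S T)"

definition generic :: "complex set \<Rightarrow> bool" where
  "generic P \<longleftrightarrow> finite P
     \<and> (\<forall>a\<in>P. \<forall>b\<in>P. \<forall>c\<in>P. a \<noteq> b \<and> a \<noteq> c \<and> b \<noteq> c \<longrightarrow> \<not> collinear {a, b, c})
     \<and> (\<forall>Q\<subseteq>P. \<exists>!T. is_mst Q T)"

end

theory Submission
  imports Defs
begin

text \<open>Suppose two edges p1a1 and p2a2 of the MST join P1 to P2, with |oa1| \<le> |oa2|.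
  Since the wedge is thin and P2 is far from the disk, a1 is closer to a2 than every point of
  the unit disk: |a1a2| \<le> |oa1| \<pi>/50 + (|oa2| - |oa1|) < |oa2| - 1 \<le> |p2a2|; and
  |p1p2| \<le> 2 < |p2a2|. Deleting p2a2 from the tree leaves two parts, and whichever part a1
  lies in, a1a2 or p1p2 reconnects them more cheaply, contradicting minimality. At least one
  such edge exists because the tree is connected.\<close>

subsection \<open>Reachability\<close>

lemma edge_length_doubleton [simp]: "edge_length {a, b} = dist a b"
  unfolding edge_length_def
  by (rule the_equality) (auto simp: doubleton_eq_iff dist_commute)

lemma edge_rel_iff [simp]: "(a, b) \<in> edge_rel E \<longleftrightarrow> {a, b} \<in> E"
  by (simp add: edge_rel_def)

lemma reachable_sym:
  assumes "(a, b) \<in> (edge_rel E)\<^sup>*"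
  shows "(b, a) \<in> (edge_rel E)\<^sup>*"
proof -
  have "sym (edge_rel E)"
    by (auto simp: sym_def insert_commute)
  then show ?thesis
    using assms by (meson sym_rtrancl symD)
qed

lemma reachable_mono:
  assumes "E \<subseteq> F" "(a, b) \<in> (edge_rel E)\<^sup>*"
  shows "(a, b) \<in> (edge_rel F)\<^sup>*"
proof -
  have "edge_rel E \<subseteq> edge_rel F"
    using assms(1) unfolding edge_rel_def by auto
  then show ?thesis
    using assms(2) rtrancl_mono by blast
qed

lemma reachable_insert_edge:
  assumes "(a, b) \<in> (edge_rel (insert {x, y} E))\<^sup>*"
  shows "(a, b) \<in> (edge_rel E)\<^sup>* \<or> (a, x) \<in> (edge_rel E)\<^sup>* \<or> (a, y) \<in> (edge_rel E)\<^sup>*"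
  using assms
proof (induction rule: rtrancl_induct)
  case base
  then show ?case by simp
next
  case (step b c)
  show ?case
  proof (cases "{b, c} \<in> E")
    case True
    then show ?thesis
      using step.IH by (meson edge_rel_iff rtrancl.rtrancl_into_rtrancl)
  next
    case False
    then have "b = x \<or> b = y"
      using step.hyps(2) by (auto simp: doubleton_eq_iff)
    then show ?thesis
      using step.IH by auto
  qed
qed

lemma reachable_remove_edge:
  assumes "(u, z) \<in> (edge_rel T)\<^sup>*" "{u, v} \<in> T"
  shows "(u, z) \<in> (edge_rel (T - {{u, v}}))\<^sup>* \<or> (v, z) \<in> (edge_rel (T - {{u, v}}))\<^sup>*"
proof -
  have "T = insert {u, v} (T - {{u, v}})"
    using assms(2) by auto
  then have "(z, u) \<in> (edge_rel (insert {u, v} (T - {{u, v}})))\<^sup>*"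
    using reachable_sym[OF assms(1)] by simp
  then show ?thesis
    using reachable_insert_edge reachable_sym by blast
qed

lemma possible_edgesD:
  assumes "{u, v} \<in> possible_edges S"
  shows "u \<in> S" "v \<in> S"
  using assms unfolding possible_edges_def by (auto simp: doubleton_eq_iff)

lemma finite_possible_edges: "finite S \<Longrightarrow> finite (possible_edges S)"
  by (rule finite_subset[of _ "Pow S"]) (auto simp: possible_edges_def)

lemma possible_edges_crossing:
  assumes "e \<in> possible_edges S" "e \<inter> A \<noteq> {}" "e \<inter> B \<noteq> {}" "A \<inter> B = {}"
  shows "\<exists>p\<in>A. \<exists>a\<in>B. e = {p, a}"
proof -
  obtain x y where e: "e = {x, y}"
    using assms(1) unfolding possible_edges_def by auto
  obtain p a where "p \<in> e" "p \<in> A" "a \<in> e" "a \<in> B"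
    using assms(2,3) by auto
  moreover have "p \<noteq> a"
    using calculation assms(4) by auto
  ultimately show ?thesis
    using e by auto
qed

lemma connected_graph_edge_leaving:
  assumes "connected_graph S E" "a \<in> S" "b \<in> S" "a \<in> A" "b \<notin> A"
  shows "\<exists>e\<in>E. e \<inter> A \<noteq> {} \<and> e - A \<noteq> {}"
proof -
  have "(a, b) \<in> (edge_rel E)\<^sup>*"
    using assms(1-3) unfolding connected_graph_def by auto
  then have "b \<in> A \<or> (\<exists>e\<in>E. e \<inter> A \<noteq> {} \<and> e - A \<noteq> {})"
    by (induction rule: rtrancl_induct) (use assms(4) in fastforce)+
  then show ?thesis
    using assms(5) by blast
qed

subsection \<open>Spanning trees and the cut property\<close>

definition graph_component :: "complex set set \<Rightarrow> complex set \<Rightarrow> complex \<Rightarrow> complex set" where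
  "graph_component E S a = {b \<in> S. (a, b) \<in> (edge_rel E)\<^sup>*}"

definition graph_components :: "complex set set \<Rightarrow> complex set \<Rightarrow> complex set set" where
  "graph_components E S = graph_component E S ` S"

lemma graph_component_eq:
  "(a, b) \<in> (edge_rel E)\<^sup>* \<Longrightarrow> graph_component E S a = graph_component E S b"
  unfolding graph_component_def by (auto intro: rtrancl_trans reachable_sym)

lemma graph_component_insert_edge:
  assumes "(a, x) \<notin> (edge_rel E)\<^sup>*" "(a, y) \<notin> (edge_rel E)\<^sup>*"
  shows "graph_component (insert {x, y} E) S a = graph_component E S a"
  using assms reachable_insert_edge reachable_mono[of E "insert {x, y} E"]
  unfolding graph_component_def by blast

lemma card_graph_components_insert_edge:
  assumes "finite S" "x \<in> S"
  shows "card (graph_components E S) \<le> card (graph_components (insert {x, y} E) S) + 1"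
proof -
  let ?F = "insert {x, y} E"
  let ?C = "graph_component E S" and ?C' = "graph_component ?F S"
  have fin: "finite (graph_components E S)" "finite (graph_components ?F S)"
    using assms(1) unfolding graph_components_def by auto
  have Cx: "?C' x \<in> graph_components ?F S"
    using assms(2) unfolding graph_components_def by auto
  have sub: "graph_components E S - {?C x, ?C y} \<subseteq> graph_components ?F S - {?C' x}"
  proof
    fix c assume "c \<in> graph_components E S - {?C x, ?C y}"
    then obtain a where a: "a \<in> S" "c = ?C a" "?C a \<noteq> ?C x" "?C a \<noteq> ?C y"
      unfolding graph_components_def by auto
    then have ax: "(a, x) \<notin> (edge_rel E)\<^sup>*" and ay: "(a, y) \<notin> (edge_rel E)\<^sup>*"
      using graph_component_eq by metis+
    have "a \<notin> ?C' x"
      using ax ay reachable_insert_edge[of a x] reachable_sym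
      unfolding graph_component_def by blast
    moreover have "a \<in> ?C' a"
      using a(1) unfolding graph_component_def by simp
    ultimately show "c \<in> graph_components ?F S - {?C' x}"
      using a graph_component_insert_edge[OF ax ay] unfolding graph_components_def by auto
  qed
  have "card (graph_components E S - {?C x, ?C y}) \<le> card (graph_components ?F S) - 1"
    using card_mono[OF _ sub] fin Cx by (simp add: card_Diff_singleton)
  moreover have "card (graph_components E S) - 2 \<le> card (graph_components E S - {?C x, ?C y})"
    using diff_card_le_card_Diff[of "{?C x, ?C y}" "graph_components E S"]
      card_insert_le_m1[of 2 "{?C y}" "?C x"] by simp
  moreover have "0 < card (graph_components ?F S)"
    using fin Cx card_gt_0_iff by blast
  ultimately show ?thesis
    by linarith
qed

lemma card_le_card_edges_plus_card_graph_components: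
  assumes "finite S" "finite E" "E \<subseteq> possible_edges S"
  shows "card S \<le> card E + card (graph_components E S)"
  using assms(2,3)
proof (induction E rule: finite_induct)
  case empty
  have "graph_components {} S = (\<lambda>a. {a}) ` S"
    unfolding graph_components_def graph_component_def edge_rel_def by auto
  then show ?case
    by (simp add: card_image)
next
  case (insert f E)
  obtain x y where "f = {x, y}" "x \<in> S"
    using insert.prems unfolding possible_edges_def by auto
  then show ?case
    using insert card_graph_components_insert_edge[OF assms(1), of x E y] by simp
qed

lemma connected_graph_card_le:
  assumes "finite S" "S \<noteq> {}" "E \<subseteq> possible_edges S" "connected_graph S E"
  shows "card S \<le> card E + 1"
proof -
  have "finite E"
    using assms(1,3) finite_possible_edges finite_subset by blast
  moreover have "graph_components E S = {S}"
    using assms(2,4) unfolding graph_components_def graph_component_def connected_graph_def by auto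
  ultimately show ?thesis
    using card_le_card_edges_plus_card_graph_components[OF assms(1) _ assms(3)] by simp
qed

lemma spanning_tree_finite: "finite S \<Longrightarrow> spanning_tree S T \<Longrightarrow> finite T"
  unfolding spanning_tree_def using finite_possible_edges finite_subset by blast

lemma spanning_tree_remove_edge_disconnects:
  assumes fin: "finite S" and st: "spanning_tree S T" and e: "{u, v} \<in> T"
  shows "(u, v) \<notin> (edge_rel (T - {{u, v}}))\<^sup>*"
proof
  assume uv: "(u, v) \<in> (edge_rel (T - {{u, v}}))\<^sup>*"
  let ?E = "T - {{u, v}}"
  have sub: "T \<subseteq> possible_edges S" and con: "connected_graph S T" and c: "card T = card S - 1"
    using st unfolding spanning_tree_def by auto
  have uS: "u \<in> S"
    using e sub possible_edgesD by blast
  have "(u, z) \<in> (edge_rel ?E)\<^sup>*" if "z \<in> S" for z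
    using reachable_remove_edge[OF _ e] con uS that uv unfolding connected_graph_def
    by (meson rtrancl_trans)
  then have "connected_graph S ?E"
    unfolding connected_graph_def using reachable_sym by (meson rtrancl_trans)
  then have "card S \<le> card ?E + 1"
    using connected_graph_card_le[OF fin] uS sub by blast
  moreover have "card ?E + 1 = card T"
    using card_Suc_Diff1[OF spanning_tree_finite[OF fin st] e] by simp
  moreover have "0 < card S"
    using uS fin card_gt_0_iff by blast
  ultimately show False
    using c by linarith
qed

lemma spanning_tree_exchange:
  assumes fin: "finite S" and st: "spanning_tree S T" and e: "{u, v} \<in> T"
    and xS: "x \<in> S" and yS: "y \<in> S"
    and ux: "(u, x) \<in> (edge_rel (T - {{u, v}}))\<^sup>*"
    and uy: "(u, y) \<notin> (edge_rel (T - {{u, v}}))\<^sup>*"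
  shows "spanning_tree S (insert {x, y} (T - {{u, v}}))" and "{x, y} \<notin> T - {{u, v}}"
proof -
  let ?E = "T - {{u, v}}"
  let ?T = "insert {x, y} ?E"
  have sub: "T \<subseteq> possible_edges S" and con: "connected_graph S T" and c: "card T = card S - 1"
    using st unfolding spanning_tree_def by auto
  have uS: "u \<in> S"
    using e sub possible_edgesD by blast
  show notin: "{x, y} \<notin> ?E"
  proof
    assume "{x, y} \<in> ?E"
    then have "(x, y) \<in> (edge_rel ?E)\<^sup>*" by (intro r_into_rtrancl) simp
    then show False
      using ux uy by (meson rtrancl_trans)
  qed
  have "x \<noteq> y"
    using ux uy by auto
  then have sub': "?T \<subseteq> possible_edges S"
    using sub xS yS unfolding possible_edges_def by blast
  have card': "card ?T = card S - 1"
    using notin card_Suc_Diff1[OF spanning_tree_finite[OF fin st] e] c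
      spanning_tree_finite[OF fin st] by simp
  have ET: "?E \<subseteq> ?T" by auto
  have vy: "(v, y) \<in> (edge_rel ?E)\<^sup>*"
    using reachable_remove_edge[OF _ e] con uS yS uy unfolding connected_graph_def by blast
  have xy: "(x, y) \<in> (edge_rel ?T)\<^sup>*" by (intro r_into_rtrancl) simp
  have "(u, z) \<in> (edge_rel ?T)\<^sup>*" if "z \<in> S" for z
  proof -
    have "(u, z) \<in> (edge_rel ?E)\<^sup>* \<or> (v, z) \<in> (edge_rel ?E)\<^sup>*"
      using reachable_remove_edge[OF _ e] con uS that unfolding connected_graph_def by blast
    then show ?thesis
      using reachable_mono[OF ET] reachable_sym ux vy xy by (meson rtrancl_trans)
  qed
  then have "connected_graph S ?T"
    unfolding connected_graph_def using reachable_sym by (meson rtrancl_trans)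
  then show "spanning_tree S ?T"
    using sub' card' unfolding spanning_tree_def by auto
qed

lemma mst_edge_le_cut_edge:
  assumes fin: "finite S" and mst: "is_mst S T" and e: "{u, v} \<in> T"
    and xS: "x \<in> S" and yS: "y \<in> S"
    and ux: "(u, x) \<in> (edge_rel (T - {{u, v}}))\<^sup>*"
    and uy: "(u, y) \<notin> (edge_rel (T - {{u, v}}))\<^sup>*"
  shows "dist u v \<le> dist x y"
proof -
  let ?E = "T - {{u, v}}"
  have st: "spanning_tree S T"
    using mst unfolding is_mst_def by auto
  note exchange = spanning_tree_exchange[OF fin st e xS yS ux uy]
  have finT: "finite T"
    using spanning_tree_finite[OF fin st] .
  have "weight T \<le> weight (insert {x, y} ?E)"
    using mst exchange(1) unfolding is_mst_def by auto
  moreover have "weight (insert {x, y} ?E) = weight ?E + dist x y"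
    unfolding weight_def using exchange(2) finT by simp
  moreover have "weight T = weight ?E + dist u v"
    unfolding weight_def using e finT by (simp add: sum.remove)
  ultimately show ?thesis
    by simp
qed

text \<open>Deleting {p2, a2} from T separates p2 from a2; whichever side a1 lies on,
  one of {a1, a2} and {p1, p2} reconnects the two sides.\<close>

lemma mst_edge_le_max_dist:
  assumes fin: "finite S" and mst: "is_mst S T"
    and e1: "{p1, a1} \<in> T" and e2: "{p2, a2} \<in> T" and ne: "{p1, a1} \<noteq> {p2, a2}"
  shows "dist p2 a2 \<le> max (dist a1 a2) (dist p1 p2)"
proof -
  have st: "spanning_tree S T"
    using mst unfolding is_mst_def by auto
  have sub: "T \<subseteq> possible_edges S" and con: "connected_graph S T"
    using st unfolding spanning_tree_def by auto
  have S: "p1 \<in> S" "a1 \<in> S" "p2 \<in> S" "a2 \<in> S"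
    using e1 e2 sub possible_edgesD by blast+
  have e2': "{a2, p2} \<in> T" and E: "T - {{p2, a2}} = T - {{a2, p2}}"
    using e2 by (simp_all add: insert_commute)
  show ?thesis
  proof (cases "(p2, a1) \<in> (edge_rel (T - {{p2, a2}}))\<^sup>*")
    case True
    then have "dist p2 a2 \<le> dist a1 a2"
      using mst_edge_le_cut_edge[OF fin mst e2 S(2,4)]
        spanning_tree_remove_edge_disconnects[OF fin st e2] by blast
    then show ?thesis by simp
  next
    case False
    have "{a1, p1} \<in> T - {{a2, p2}}"
      using e1 ne by (simp add: insert_commute)
    then have "(a1, p1) \<in> (edge_rel (T - {{a2, p2}}))\<^sup>*"
      by (intro r_into_rtrancl) simp
    moreover have "(a2, a1) \<in> (edge_rel (T - {{a2, p2}}))\<^sup>*"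
      using False reachable_remove_edge[OF _ e2] con S unfolding connected_graph_def E by blast
    ultimately have "dist a2 p2 \<le> dist p1 p2"
      using mst_edge_le_cut_edge[OF fin mst e2' S(1,3)]
        spanning_tree_remove_edge_disconnects[OF fin st e2'] by (meson rtrancl_trans)
    then show ?thesis by (simp add: dist_commute)
  qed
qed

subsection \<open>Geometry of a thin wedge\<close>

lemma norm_cis_diff_le: "cmod (cis a - cis b) \<le> \<bar>a - b\<bar>"
proof -
  have "(cmod (cis a - cis b))\<^sup>2 = (cos a - cos b)\<^sup>2 + (sin a - sin b)\<^sup>2"
    by (simp add: cmod_power2)
  also have "\<dots> = 2 - 2 * cos (a - b)"
    by (simp add: cos_diff power2_eq_square algebra_simps)
  also have "cos (a - b) = cos (2 * ((a - b) / 2))"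
    by (rule arg_cong[of _ _ cos]) simp
  also have "2 - 2 * \<dots> = (2 * sin ((a - b) / 2))\<^sup>2"
    by (simp only: cos_double_sin) (simp add: power2_eq_square)
  finally have "cmod (cis a - cis b) = \<bar>2 * sin ((a - b) / 2)\<bar>"
    by (metis abs_norm_cancel power2_abs power2_eq_iff_nonneg abs_ge_zero norm_ge_zero)
  also have "\<dots> \<le> \<bar>a - b\<bar>"
    using abs_sin_x_le_abs_x[of "(a - b) / 2"] by simp
  finally show ?thesis .
qed

lemma dist_lt_in_thin_wedge:
  fixes oc a1 a2 p :: complex
  assumes far: "3 < dist oc a1" and le: "dist oc a1 \<le> dist oc a2" and disk: "dist oc p \<le> 1"
    and polar1: "a1 - oc = complex_of_real (dist oc a1) * cis \<phi>1"
    and polar2: "a2 - oc = complex_of_real (dist oc a2) * cis \<phi>2"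
    and angle: "\<bar>\<phi>1 - \<phi>2\<bar> \<le> pi / 50"
  shows "dist a1 a2 < dist p a2"
proof -
  define r1 r2 where "r1 = dist oc a1" and "r2 = dist oc a2"
  have a1: "a1 = oc + complex_of_real r1 * cis \<phi>1" and a2: "a2 = oc + complex_of_real r2 * cis \<phi>2"
    using polar1 polar2 unfolding r1_def r2_def by (simp_all add: algebra_simps)
  have r: "3 < r1" "r1 \<le> r2"
    using far le unfolding r1_def r2_def by simp_all
  have "dist a1 a2 = cmod (complex_of_real r1 * (cis \<phi>1 - cis \<phi>2) - complex_of_real (r2 - r1) * cis \<phi>2)"
    unfolding dist_norm by (subst a1, subst a2) (simp add: algebra_simps)
  also have "\<dots> \<le> r1 * cmod (cis \<phi>1 - cis \<phi>2) + (r2 - r1)"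
    using r by (intro order_trans[OF norm_triangle_ineq4]) (simp add: norm_mult flip: of_real_diff)
  also have "\<dots> \<le> r1 * (pi / 50) + (r2 - r1)"
    using norm_cis_diff_le[of \<phi>1 \<phi>2] angle r
    by (intro add_right_mono mult_left_mono) auto
  also have "\<dots> < r2 - 1"
  proof -
    have "r1 * (pi / 50) < r1 * (4 / 50)"
      using pi_less_4 r by (intro mult_strict_left_mono) auto
    then show ?thesis
      using r by linarith
  qed
  also have "\<dots> \<le> dist p a2"
    using dist_triangle[of oc a2 p] disk unfolding r2_def by simp
  finally show ?thesis .
qed

lemma mst_crossing_edges_eq:
  assumes fin: "finite S" and mst: "is_mst S T"
    and e1: "{p1, a1} \<in> T" and e2: "{p2, a2} \<in> T"
    and disk: "dist oc p1 \<le> 1" "dist oc p2 \<le> 1"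
    and far: "3 < dist oc a1" and le: "dist oc a1 \<le> dist oc a2"
    and polar1: "a1 - oc = complex_of_real (dist oc a1) * cis \<phi>1"
    and polar2: "a2 - oc = complex_of_real (dist oc a2) * cis \<phi>2"
    and angle: "\<bar>\<phi>1 - \<phi>2\<bar> \<le> pi / 50"
  shows "{p1, a1} = {p2, a2}"
proof (rule ccontr)
  assume "{p1, a1} \<noteq> {p2, a2}"
  then have "dist p2 a2 \<le> max (dist a1 a2) (dist p1 p2)"
    by (rule mst_edge_le_max_dist[OF fin mst e1 e2])
  moreover have "dist a1 a2 < dist p2 a2"
    by (rule dist_lt_in_thin_wedge[OF far le disk(2) polar1 polar2 angle])
  moreover have "dist p1 p2 < dist p2 a2"
    using dist_triangle[of p1 p2 oc] dist_triangle[of oc a2 p2] disk far le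
    by (simp add: dist_commute)
  ultimately show False
    by linarith
qed

lemma mst_unique_crossing_edge:
  assumes fin: "finite S" and mst: "is_mst S T"
    and disk: "\<forall>p\<in>P1. dist oc p \<le> 1"
    and far: "\<forall>a\<in>P2. dist oc a > 3"
    and wedge: "\<forall>a\<in>P2. \<exists>\<phi>. \<alpha> \<le> \<phi> \<and> \<phi> \<le> \<alpha> + pi / 50
                       \<and> a - oc = complex_of_real (dist oc a) * cis \<phi>"
    and P: "p1 \<in> P1" "a1 \<in> P2" "p2 \<in> P1" "a2 \<in> P2"
    and e1: "{p1, a1} \<in> T" and e2: "{p2, a2} \<in> T"
  shows "{p1, a1} = {p2, a2}"
proof -
  obtain \<phi>1 \<phi>2 where
    \<phi>1: "\<alpha> \<le> \<phi>1" "\<phi>1 \<le> \<alpha> + pi / 50" "a1 - oc = complex_of_real (dist oc a1) * cis \<phi>1" and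
    \<phi>2: "\<alpha> \<le> \<phi>2" "\<phi>2 \<le> \<alpha> + pi / 50" "a2 - oc = complex_of_real (dist oc a2) * cis \<phi>2"
    using wedge P by meson
  then have angle: "\<bar>\<phi>1 - \<phi>2\<bar> \<le> pi / 50" "\<bar>\<phi>2 - \<phi>1\<bar> \<le> pi / 50"
    unfolding abs_le_iff by linarith+
  show ?thesis
  proof (cases "dist oc a1 \<le> dist oc a2")
    case True
    then show ?thesis
      using mst_crossing_edges_eq[OF fin mst e1 e2 _ _ _ True \<phi>1(3) \<phi>2(3) angle(1)] disk far P
      by blast
  next
    case False
    then have "dist oc a2 \<le> dist oc a1"
      by simp
    then show ?thesis
      using mst_crossing_edges_eq[OF fin mst e2 e1 _ _ _ _ \<phi>2(3) \<phi>1(3) angle(2)] disk far P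
      by metis
  qed
qed

theorem lemma3:
  fixes P1 P2 :: "complex set" and oc :: complex and \<alpha> :: real
  assumes gen: "generic (P1 \<union> P2)"
    and ne1: "P1 \<noteq> {}" and ne2: "P2 \<noteq> {}"
    and disk: "\<forall>p\<in>P1. dist oc p \<le> 1"
    and far: "\<forall>a\<in>P2. dist oc a > 3"
    and wedge: "\<forall>a\<in>P2. \<exists>\<phi>. \<alpha> \<le> \<phi> \<and> \<phi> \<le> \<alpha> + pi / 50
                       \<and> a - oc = complex_of_real (dist oc a) * cis \<phi>"
  shows "card {e \<in> MST (P1 \<union> P2). e \<inter> P1 \<noteq> {} \<and> e \<inter> P2 \<noteq> {}} = 1"
proof -
  define P where "P = P1 \<union> P2"
  define X where "X = {e \<in> MST P. e \<inter> P1 \<noteq> {} \<and> e \<inter> P2 \<noteq> {}}"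
  have fin: "finite P" and mst: "is_mst P (MST P)"
    using gen theI'[of "is_mst P"] unfolding generic_def P_def MST_def by auto
  then have sub: "MST P \<subseteq> possible_edges P" and con: "connected_graph P (MST P)"
    unfolding is_mst_def spanning_tree_def by auto
  have disj: "P1 \<inter> P2 = {}"
    using disk far by force
  have crossing: "\<exists>p\<in>P1. \<exists>a\<in>P2. e = {p, a}" if "e \<in> X" for e
    using possible_edges_crossing[of e P P1 P2] that sub disj unfolding X_def by auto
  obtain p a where "p \<in> P1" "a \<in> P2"
    using ne1 ne2 by blast
  then obtain e where e: "e \<in> MST P" "e \<inter> P1 \<noteq> {}" "e - P1 \<noteq> {}"
    using connected_graph_edge_leaving[OF con, of p a P1] disj unfolding P_def by blast
  moreover have "e \<subseteq> P"
    using sub e(1) unfolding possible_edges_def by auto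
  ultimately have "e \<in> X"
    unfolding X_def P_def by blast
  moreover have "e' = e" if "e' \<in> X" for e'
    using crossing[OF that] crossing[OF \<open>e \<in> X\<close>] that \<open>e \<in> X\<close>
      mst_unique_crossing_edge[OF fin mst disk far wedge] unfolding X_def by blast
  ultimately have "X = {e}"
    by blast
  then show ?thesis
    unfolding X_def P_def by simp
qed

end
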